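(* Let $R$ be a ring with unity and involution $*$, and let $a\in R$ be Moore-Penrose invertible with Moore-Penrose inverse $a^{\dagger}$. Then there exist $a_1,a_2\in R$ with $aa^*=a_1+a_2$ such that (1) $a_1$ is left dual core invertible, (2) $a_2^2=0$, (3) $a_2^*a_1=0=a_1a_2$. In addition, $a^*a$ is left dual core invertible and $a^{\dagger}(a^{\dagger})^*$ is a left dual core inverse of $a^*a$.
   Context: The Moore-Penrose inverse $a^\dagger$ is the unique $x\in R$ with $axa=a$, $xax=x$, $(ax)^*=ax$, $(xa)^*=xa$. An element $y$ is left dual core invertible if there exists $z\in R$ with $yzy=y$, $(zy)^*=zy$ and $z^2y=z$; such $z$ is a left dual core inverse of $y$. *)

theory Defs
  imports Main
begin

definition involution :: "('a::ring_1 \<Rightarrow> 'a) \<Rightarrow> bool" where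
  "involution s \<longleftrightarrow>
     (\<forall>x. s (s x) = x) \<and> (\<forall>x y. s (x + y) = s x + s y) \<and> (\<forall>x y. s (x * y) = s y * s x)"

definition is_MP_inverse :: "('a::ring_1 \<Rightarrow> 'a) \<Rightarrow> 'a \<Rightarrow> 'a \<Rightarrow> bool" where
  "is_MP_inverse s a x \<longleftrightarrow>
     a * x * a = a \<and> x * a * x = x \<and> s (a * x) = a * x \<and> s (x * a) = x * a"

definition MP_invertible :: "('a::ring_1 \<Rightarrow> 'a) \<Rightarrow> 'a \<Rightarrow> bool" where
  "MP_invertible s a \<longleftrightarrow> (\<exists>x. is_MP_inverse s a x)"

definition MP_inv :: "('a::ring_1 \<Rightarrow> 'a) \<Rightarrow> 'a \<Rightarrow> 'a" where
  "MP_inv s a = (THE x. is_MP_inverse s a x)"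

definition is_left_dual_core_inverse :: "('a::ring_1 \<Rightarrow> 'a) \<Rightarrow> 'a \<Rightarrow> 'a \<Rightarrow> bool" where
  "is_left_dual_core_inverse s y z \<longleftrightarrow>
     y * z * y = y \<and> s (z * y) = z * y \<and> z * z * y = z"

definition left_dual_core_invertible :: "('a::ring_1 \<Rightarrow> 'a) \<Rightarrow> 'a \<Rightarrow> bool" where
  "left_dual_core_invertible s y \<longleftrightarrow> (\<exists>z. is_left_dual_core_inverse s y z)"

end

theory Submission
  imports Defs
begin

text \<open>If \<open>x\<close> is the Moore-Penrose inverse of \<open>a\<close>, then \<open>x x\<^sup>*\<close> is a left dual core inverse
  of \<open>a\<^sup>* a\<close>; since \<open>x\<^sup>*\<close> is the Moore-Penrose inverse of \<open>a\<^sup>*\<close>, also \<open>x\<^sup>* x\<close> is a left dual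
  core inverse of \<open>a a\<^sup>*\<close>. So \<open>a a\<^sup>*\<close> is itself left dual core invertible, and the required
  decomposition is \<open>a a\<^sup>* = a a\<^sup>* + 0\<close>.\<close>

lemma involution_involutive: "involution s \<Longrightarrow> s (s x) = x"
  unfolding involution_def by blast

lemma involution_mult: "involution s \<Longrightarrow> s (x * y) = s y * s x"
  unfolding involution_def by blast

lemma involution_zero:
  assumes "involution s"
  shows "s 0 = 0"
proof -
  have "s (0 + 0) = s 0 + s 0"
    using assms unfolding involution_def by blast
  then show ?thesis by simp
qed

lemma is_MP_inverse_unique:
  assumes inv: "involution s" and x: "is_MP_inverse s a x" and y: "is_MP_inverse s a y"
  shows "x = y"
proof -
  note sm = involution_mult[OF inv]
  have x1: "a * x * a = a" and x2: "x * a * x = x"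
    and x3: "s (a * x) = a * x" and x4: "s (x * a) = x * a"
    using x unfolding is_MP_inverse_def by auto
  have y1: "a * y * a = a" and y2: "y * a * y = y"
    and y3: "s (a * y) = a * y" and y4: "s (y * a) = y * a"
    using y unfolding is_MP_inverse_def by auto
  have "x = x * s (a * x)"
    using x2 x3 by (simp add: mult.assoc)
  also have "\<dots> = x * s (a * y * a * x)"
    using y1 by simp
  also have "\<dots> = x * (s (a * x) * s (a * y))"
    by (simp add: sm mult.assoc)
  also have "\<dots> = x * a * y"
    using x2 x3 y3 by (metis mult.assoc)
  finally have left: "x = x * a * y" .
  have "y = s (y * a) * y"
    using y2 y4 by simp
  also have "\<dots> = s (y * a * x * a) * y"
    using x1 by (simp add: mult.assoc)
  also have "\<dots> = s (x * a) * s (y * a) * y"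
    by (simp add: sm mult.assoc)
  also have "\<dots> = x * a * y"
    using x4 y4 y2 by (simp add: mult.assoc)
  finally show ?thesis
    using left by simp
qed

lemma MP_inv_eq:
  assumes "involution s" and "is_MP_inverse s a x"
  shows "MP_inv s a = x"
  unfolding MP_inv_def using assms is_MP_inverse_unique by blast

lemma is_MP_inverse_involution:
  assumes inv: "involution s" and x: "is_MP_inverse s a x"
  shows "is_MP_inverse s (s a) (s x)"
proof -
  note ss = involution_involutive[OF inv] and sm = involution_mult[OF inv]
  have "a * x * a = a" "x * a * x = x" "s (a * x) = a * x" "s (x * a) = x * a"
    using x unfolding is_MP_inverse_def by auto
  then have "s (a * x * a) = s a" "s (x * a * x) = s x"
    "s (s a * s x) = s a * s x" "s (s x * s a) = s x * s a"
    by (simp_all add: ss sm)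
  then show ?thesis
    unfolding is_MP_inverse_def by (simp add: sm mult.assoc)
qed

lemma is_MP_inverse_imp_left_dual_core_inverse:
  assumes inv: "involution s" and x: "is_MP_inverse s a x"
  shows "is_left_dual_core_inverse s (s a * a) (x * s x)"
proof -
  note sm = involution_mult[OF inv]
  have x1: "a * x * a = a" and x2: "x * a * x = x"
    and x3: "s (a * x) = a * x" and x4: "s (x * a) = x * a"
    using x unfolding is_MP_inverse_def by auto
  have absorb: "x * s x * (s a * a) = x * a"
    using x2 x3 by (metis mult.assoc sm)
  have "s x * x * a = s x"
    using x2 x4 by (metis mult.assoc sm)
  then have "x * s x * (x * s x) * (s a * a) = x * s x"
    using absorb by (metis mult.assoc)
  moreover have "s a * a * (x * s x) * (s a * a) = s a * a"
    using absorb x1 by (metis mult.assoc)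
  ultimately show ?thesis
    unfolding is_left_dual_core_inverse_def using absorb x4 by simp
qed

theorem corollary3p15:
  fixes s :: "'a::ring_1 \<Rightarrow> 'a" and a :: 'a
  assumes "involution s"
    and "MP_invertible s a"
  shows "(\<exists>a1 a2. a * s a = a1 + a2 \<and> left_dual_core_invertible s a1 \<and> a2 * a2 = 0
            \<and> s a2 * a1 = 0 \<and> a1 * a2 = 0)
         \<and> left_dual_core_invertible s (s a * a)
         \<and> is_left_dual_core_inverse s (s a * a) (MP_inv s a * s (MP_inv s a))"
proof -
  obtain x where x: "is_MP_inverse s a x"
    using assms(2) unfolding MP_invertible_def by blast
  have adjoint: "is_left_dual_core_inverse s (s a * a) (x * s x)"
    using is_MP_inverse_imp_left_dual_core_inverse[OF assms(1) x] .
  have "is_left_dual_core_inverse s (s (s a) * s a) (s x * s (s x))"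
    using is_MP_inverse_imp_left_dual_core_inverse[OF assms(1) is_MP_inverse_involution[OF assms(1) x]] .
  then have "left_dual_core_invertible s (a * s a)"
    unfolding left_dual_core_invertible_def by (auto simp: involution_involutive[OF assms(1)])
  then have "\<exists>a1 a2. a * s a = a1 + a2 \<and> left_dual_core_invertible s a1 \<and> a2 * a2 = 0
               \<and> s a2 * a1 = 0 \<and> a1 * a2 = 0"
    by (intro exI[of _ "a * s a"] exI[of _ 0]) (simp add: involution_zero[OF assms(1)])
  moreover have "left_dual_core_invertible s (s a * a)"
    using adjoint unfolding left_dual_core_invertible_def by blast
  ultimately show ?thesis
    using adjoint MP_inv_eq[OF assms(1) x] by simp
qed

end
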